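(* Let $A=\sum\{A_{ij}\mid i,j\in I\}$ be a generalized matrix ring and let $D=\sum\{D_{ij}\mid i,j\in I\}$ be a gm ideal of $A$ with $D_{ij}\subseteq r_n(A_{ij})$ for all $i,j\in I$. Then every element of $D$ is von Neumann regular in $A$; in particular $D\subseteq r_n(A)$.
   Context: A generalized matrix (gm) ring: $I$ is a nonempty index set; for $i,j\in I$, $A_{ij}$ are additive groups with biadditive maps $A_{ij}\times A_{jl}\to A_{il}$, $(x,y)\mapsto xy$, which are associative ($(xy)z=x(yz)$ whenever defined). $A$ is the external direct sum of the $A_{ij}$ (finitely many nonzero entries) with multiplication $(xy)_{ij}=\sum_k x_{ik}y_{kj}$. A gm ideal is an ideal $B$ of $A$ of the form $B=\sum\{B_{ij}\}$ with $B_{ij}\subseteq A_{ij}$. Each $A_{ij}$ is regarded as a $\Gamma$-ring with $\Gamma=A_{ji}$ (an "$A_{ji}$-ring"): an ideal of it is an additive subgroup $B\subseteq A_{ij}$ with $A_{ij}A_{ji}B\subseteq B$ and $BA_{ji}A_{ij}\subseteq B$; an element $x\in A_{ij}$ is von Neumann regular if $x=xyx$ for some $y\in A_{ji}$; $r_n(A_{ij})$ is the largest ideal of the $A_{ji}$-ring $A_{ij}$ all of whose elements are von Neumann regular. For the ring $A$, $x$ is von Neumann regular if $x=xyx$ for some $y\in A$, and $r_n(A)$ is the largest ideal of $A$ consisting of von Neumann regular elements. *)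

theory Defs
  imports Main
begin

text \<open>All component groups A i j are modelled as additive subgroups of one ambient
  abelian group 'a (no loss of generality: embed them into their direct sum).
  m i j l :: A_ij \<times> A_jl \<rightarrow> A_il is the biadditive, associative multiplication.\<close>

definition add_subgroup :: "'a::ab_group_add set \<Rightarrow> bool" where
  "add_subgroup B \<longleftrightarrow> 0 \<in> B \<and> (\<forall>x\<in>B. \<forall>y\<in>B. x + y \<in> B) \<and> (\<forall>x\<in>B. - x \<in> B)"

definition gm_ring :: "'i set \<Rightarrow> ('i \<Rightarrow> 'i \<Rightarrow> 'a::ab_group_add set)
    \<Rightarrow> ('i \<Rightarrow> 'i \<Rightarrow> 'i \<Rightarrow> 'a \<Rightarrow> 'a \<Rightarrow> 'a) \<Rightarrow> bool" where
  "gm_ring I A m \<longleftrightarrow>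
     I \<noteq> {} \<and>
     (\<forall>i\<in>I. \<forall>j\<in>I. add_subgroup (A i j)) \<and>
     (\<forall>i\<in>I. \<forall>j\<in>I. \<forall>l\<in>I. \<forall>x\<in>A i j. \<forall>y\<in>A j l. m i j l x y \<in> A i l) \<and>
     (\<forall>i\<in>I. \<forall>j\<in>I. \<forall>l\<in>I. \<forall>x\<in>A i j. \<forall>x'\<in>A i j. \<forall>y\<in>A j l.
        m i j l (x + x') y = m i j l x y + m i j l x' y) \<and>
     (\<forall>i\<in>I. \<forall>j\<in>I. \<forall>l\<in>I. \<forall>x\<in>A i j. \<forall>y\<in>A j l. \<forall>y'\<in>A j l.
        m i j l x (y + y') = m i j l x y + m i j l x y') \<and>
     (\<forall>i\<in>I. \<forall>j\<in>I. \<forall>k\<in>I. \<forall>l\<in>I. \<forall>x\<in>A i j. \<forall>y\<in>A j k. \<forall>z\<in>A k l.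
        m i k l (m i j k x y) z = m i j l x (m j k l y z))"

definition gm_carrier :: "'i set \<Rightarrow> ('i \<Rightarrow> 'i \<Rightarrow> 'a::ab_group_add set) \<Rightarrow> ('i \<Rightarrow> 'i \<Rightarrow> 'a) set" where
  "gm_carrier I A = {x. (\<forall>i j. if i \<in> I \<and> j \<in> I then x i j \<in> A i j else x i j = 0)
                        \<and> finite {(i, j). x i j \<noteq> 0}}"

definition gm_add :: "('i \<Rightarrow> 'i \<Rightarrow> 'a::ab_group_add) \<Rightarrow> ('i \<Rightarrow> 'i \<Rightarrow> 'a) \<Rightarrow> 'i \<Rightarrow> 'i \<Rightarrow> 'a" where
  "gm_add x y = (\<lambda>i j. x i j + y i j)"

definition gm_neg :: "('i \<Rightarrow> 'i \<Rightarrow> 'a::ab_group_add) \<Rightarrow> 'i \<Rightarrow> 'i \<Rightarrow> 'a" where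
  "gm_neg x = (\<lambda>i j. - x i j)"

definition gm_zero :: "'i \<Rightarrow> 'i \<Rightarrow> 'a::ab_group_add" where
  "gm_zero = (\<lambda>i j. 0)"

text \<open>(xy)_ij = \<Sum>_k x_ik y_kj; the sum is over the finitely many k with x i k \<noteq> 0
  (the other terms vanish by biadditivity).\<close>

definition gm_mult :: "'i set \<Rightarrow> ('i \<Rightarrow> 'i \<Rightarrow> 'i \<Rightarrow> 'a \<Rightarrow> 'a \<Rightarrow> 'a::ab_group_add)
    \<Rightarrow> ('i \<Rightarrow> 'i \<Rightarrow> 'a) \<Rightarrow> ('i \<Rightarrow> 'i \<Rightarrow> 'a) \<Rightarrow> 'i \<Rightarrow> 'i \<Rightarrow> 'a" where
  "gm_mult I m x y = (\<lambda>i j. if i \<in> I \<and> j \<in> I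
       then (\<Sum>k\<in>{k\<in>I. x i k \<noteq> 0}. m i k j (x i k) (y k j)) else 0)"

definition gm_ideal :: "'i set \<Rightarrow> ('i \<Rightarrow> 'i \<Rightarrow> 'a::ab_group_add set)
    \<Rightarrow> ('i \<Rightarrow> 'i \<Rightarrow> 'i \<Rightarrow> 'a \<Rightarrow> 'a \<Rightarrow> 'a) \<Rightarrow> ('i \<Rightarrow> 'i \<Rightarrow> 'a) set \<Rightarrow> bool" where
  "gm_ideal I A m B \<longleftrightarrow> B \<subseteq> gm_carrier I A \<and> gm_zero \<in> B \<and>
     (\<forall>x\<in>B. \<forall>y\<in>B. gm_add x y \<in> B) \<and> (\<forall>x\<in>B. gm_neg x \<in> B) \<and>
     (\<forall>a\<in>gm_carrier I A. \<forall>x\<in>B. gm_mult I m a x \<in> B \<and> gm_mult I m x a \<in> B)"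

definition gm_vn_regular :: "'i set \<Rightarrow> ('i \<Rightarrow> 'i \<Rightarrow> 'a::ab_group_add set)
    \<Rightarrow> ('i \<Rightarrow> 'i \<Rightarrow> 'i \<Rightarrow> 'a \<Rightarrow> 'a \<Rightarrow> 'a) \<Rightarrow> ('i \<Rightarrow> 'i \<Rightarrow> 'a) \<Rightarrow> bool" where
  "gm_vn_regular I A m x \<longleftrightarrow>
     (\<exists>y\<in>gm_carrier I A. x = gm_mult I m (gm_mult I m x y) x)"

text \<open>r_n(A): the largest ideal consisting of von Neumann regular elements,
  i.e. the union of all such ideals.\<close>

definition gm_rn :: "'i set \<Rightarrow> ('i \<Rightarrow> 'i \<Rightarrow> 'a::ab_group_add set)
    \<Rightarrow> ('i \<Rightarrow> 'i \<Rightarrow> 'i \<Rightarrow> 'a \<Rightarrow> 'a \<Rightarrow> 'a) \<Rightarrow> ('i \<Rightarrow> 'i \<Rightarrow> 'a) set" where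
  "gm_rn I A m = \<Union>{B. gm_ideal I A m B \<and> (\<forall>x\<in>B. gm_vn_regular I A m x)}"

text \<open>A_ij as an A_ji-ring (Gamma-ring).\<close>

definition comp_ideal :: "('i \<Rightarrow> 'i \<Rightarrow> 'a::ab_group_add set)
    \<Rightarrow> ('i \<Rightarrow> 'i \<Rightarrow> 'i \<Rightarrow> 'a \<Rightarrow> 'a \<Rightarrow> 'a) \<Rightarrow> 'i \<Rightarrow> 'i \<Rightarrow> 'a set \<Rightarrow> bool" where
  "comp_ideal A m i j B \<longleftrightarrow> B \<subseteq> A i j \<and> add_subgroup B \<and>
     (\<forall>a\<in>A i j. \<forall>g\<in>A j i. \<forall>b\<in>B. m i i j (m i j i a g) b \<in> B) \<and>
     (\<forall>b\<in>B. \<forall>g\<in>A j i. \<forall>a\<in>A i j. m i i j (m i j i b g) a \<in> B)"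

definition comp_vn_regular :: "('i \<Rightarrow> 'i \<Rightarrow> 'a::ab_group_add set)
    \<Rightarrow> ('i \<Rightarrow> 'i \<Rightarrow> 'i \<Rightarrow> 'a \<Rightarrow> 'a \<Rightarrow> 'a) \<Rightarrow> 'i \<Rightarrow> 'i \<Rightarrow> 'a \<Rightarrow> bool" where
  "comp_vn_regular A m i j x \<longleftrightarrow> (\<exists>y\<in>A j i. x = m i i j (m i j i x y) x)"

definition comp_rn :: "('i \<Rightarrow> 'i \<Rightarrow> 'a::ab_group_add set)
    \<Rightarrow> ('i \<Rightarrow> 'i \<Rightarrow> 'i \<Rightarrow> 'a \<Rightarrow> 'a \<Rightarrow> 'a) \<Rightarrow> 'i \<Rightarrow> 'i \<Rightarrow> 'a set" where
  "comp_rn A m i j = \<Union>{B. comp_ideal A m i j B \<and> (\<forall>x\<in>B. comp_vn_regular A m i j x)}"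

definition gm_sum_set :: "'i set \<Rightarrow> ('i \<Rightarrow> 'i \<Rightarrow> 'a::ab_group_add set)
    \<Rightarrow> ('i \<Rightarrow> 'i \<Rightarrow> 'a set) \<Rightarrow> ('i \<Rightarrow> 'i \<Rightarrow> 'a) set" where
  "gm_sum_set I A D = {x \<in> gm_carrier I A. \<forall>i\<in>I. \<forall>j\<in>I. x i j \<in> D i j}"

end

theory Submission
  imports Defs "HOL-Library.Function_Algebras"
begin

text \<open>An element d of the gm ideal D has finitely many nonzero entries, and every
  d - dyd (y \<in> A) lies again in D. If d is concentrated in row i and d_ij \<noteq> 0, pick
  g \<in> A_ji with d_ij = d_ij g d_ij and let y be g placed at position (j, i): then d - dyd
  is concentrated in row i and has fewer nonzero entries. For general d, the row i
  part r of d lies in D, hence is regular by the first case, r = r y r; cutting y down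
  to its column i gives d - dyd with row i deleted and no new nonzero rows. Both
  inductions close because in any (nonunital) ring a is regular as soon as a - aya is.\<close>

locale nonunital_ring =
  fixes R :: "'b::ab_group_add set" and M :: "'b \<Rightarrow> 'b \<Rightarrow> 'b"
  assumes zero_closed: "0 \<in> R"
    and add_closed: "a \<in> R \<Longrightarrow> b \<in> R \<Longrightarrow> a + b \<in> R"
    and uminus_closed: "a \<in> R \<Longrightarrow> - a \<in> R"
    and mult_closed: "a \<in> R \<Longrightarrow> b \<in> R \<Longrightarrow> M a b \<in> R"
    and distrib_left: "a \<in> R \<Longrightarrow> b \<in> R \<Longrightarrow> c \<in> R \<Longrightarrow> M (a + b) c = M a c + M b c"
    and distrib_right: "a \<in> R \<Longrightarrow> b \<in> R \<Longrightarrow> c \<in> R \<Longrightarrow> M a (b + c) = M a b + M a c"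
    and mult_assoc: "a \<in> R \<Longrightarrow> b \<in> R \<Longrightarrow> c \<in> R \<Longrightarrow> M (M a b) c = M a (M b c)"
begin

definition regular :: "'b \<Rightarrow> bool" where
  "regular a \<longleftrightarrow> (\<exists>y\<in>R. a = M (M a y) a)"

lemma diff_closed: "a \<in> R \<Longrightarrow> b \<in> R \<Longrightarrow> a - b \<in> R"
  by (metis add_closed uminus_closed diff_conv_add_uminus)

lemma mult_zero_left: "c \<in> R \<Longrightarrow> M 0 c = 0"
  using distrib_left[of 0 0 c] zero_closed by simp

lemma mult_zero_right: "c \<in> R \<Longrightarrow> M c 0 = 0"
  using distrib_right[of c 0 0] zero_closed by simp

lemma mult_minus_left: "a \<in> R \<Longrightarrow> c \<in> R \<Longrightarrow> M (- a) c = - M a c"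
  using distrib_left[of a "- a" c] uminus_closed mult_zero_left
  by (metis add.commute neg_eq_iff_add_eq_0 add.right_inverse)

lemma mult_minus_right: "a \<in> R \<Longrightarrow> c \<in> R \<Longrightarrow> M c (- a) = - M c a"
  using distrib_right[of c a "- a"] uminus_closed mult_zero_right
  by (metis add.commute neg_eq_iff_add_eq_0 add.right_inverse)

lemma left_diff_distrib: "a \<in> R \<Longrightarrow> b \<in> R \<Longrightarrow> c \<in> R \<Longrightarrow> M (a - b) c = M a c - M b c"
  using distrib_left[of a "- b" c] mult_minus_left[of b c] uminus_closed[of b] by simp

lemma right_diff_distrib: "a \<in> R \<Longrightarrow> b \<in> R \<Longrightarrow> c \<in> R \<Longrightarrow> M c (a - b) = M c a - M c b"
  using distrib_right[of c a "- b"] mult_minus_right[of b c] uminus_closed[of b] by simp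

lemma regular_zero: "regular 0"
  unfolding regular_def using zero_closed mult_zero_left by metis

text \<open>With a formal unit, a - aya = (1 - ay) a = a (1 - ya); so if a - aya = (a - aya) w (a - aya),
  then a = aya + (1 - ay) awa (1 - ya) = a y' a with the witness y' below.\<close>

lemma regular_if_regular_diff:
  assumes a: "a \<in> R" and y: "y \<in> R" and reg: "regular (a - M (M a y) a)"
  shows "regular a"
proof -
  from reg obtain w where w: "w \<in> R"
    and z: "a - M (M a y) a = M (M (a - M (M a y) a) w) (a - M (M a y) a)"
    unfolding regular_def by blast
  let ?y' = "y + w - M (M w a) y - M (M y a) w + M (M (M (M y a) w) a) y"
  have "?y' \<in> R" by (intro add_closed diff_closed mult_closed a y w)
  moreover have "M (M a ?y') a = a"
    using z a y w
    by (simp add: distrib_left distrib_right left_diff_distrib right_diff_distrib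
        mult_closed add_closed diff_closed mult_assoc algebra_simps)
  ultimately show ?thesis unfolding regular_def by metis
qed

lemma regular_by_descent:
  fixes f :: "'b \<Rightarrow> nat"
  assumes closed: "\<And>a. P a \<Longrightarrow> a \<in> R"
    and descent: "\<And>a. P a \<Longrightarrow> a \<noteq> 0 \<Longrightarrow>
      \<exists>y\<in>R. P (a - M (M a y) a) \<and> f (a - M (M a y) a) < f a"
    and "P a"
  shows "regular a"
  using \<open>P a\<close>
proof (induction a rule: measure_induct_rule[of f])
  case (less a)
  show ?case
  proof (cases "a = 0")
    case True
    then show ?thesis using regular_zero by simp
  next
    case False
    then obtain y where "y \<in> R" "P (a - M (M a y) a)" "f (a - M (M a y) a) < f a"
      using descent less.prems by blast
    then show ?thesis
      using less.IH regular_if_regular_diff closed less.prems by blast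
  qed
qed

end

definition indices :: "('i \<Rightarrow> 'i \<Rightarrow> 'a::zero) \<Rightarrow> 'i set" where
  "indices x = {i. \<exists>j. x i j \<noteq> 0 \<or> x j i \<noteq> 0}"

definition nonzero_rows :: "('i \<Rightarrow> 'i \<Rightarrow> 'a::zero) \<Rightarrow> 'i set" where
  "nonzero_rows x = {i. \<exists>j. x i j \<noteq> 0}"

definition row_support :: "('i \<Rightarrow> 'i \<Rightarrow> 'a::zero) \<Rightarrow> 'i \<Rightarrow> 'i set" where
  "row_support x i = {j. x i j \<noteq> 0}"

definition row_part :: "('i \<Rightarrow> 'i \<Rightarrow> 'a::zero) \<Rightarrow> 'i \<Rightarrow> 'i \<Rightarrow> 'i \<Rightarrow> 'a" where
  "row_part x i = (\<lambda>p q. if p = i then x p q else 0)"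

definition column_part :: "('i \<Rightarrow> 'i \<Rightarrow> 'a::zero) \<Rightarrow> 'i \<Rightarrow> 'i \<Rightarrow> 'i \<Rightarrow> 'a" where
  "column_part x i = (\<lambda>p q. if q = i then x p q else 0)"

definition single_entry :: "'i \<Rightarrow> 'i \<Rightarrow> 'a::zero \<Rightarrow> 'i \<Rightarrow> 'i \<Rightarrow> 'a" where
  "single_entry j i g = (\<lambda>k l. if k = j \<and> l = i then g else 0)"

lemma indicesI1: "x i j \<noteq> 0 \<Longrightarrow> i \<in> indices x"
  and indicesI2: "x i j \<noteq> 0 \<Longrightarrow> j \<in> indices x"
  unfolding indices_def by blast+

lemma finite_indices:
  assumes "finite {(i, j). x i j \<noteq> 0}"
  shows "finite (indices x)"
proof -
  have "indices x \<subseteq> fst ` {(i, j). x i j \<noteq> 0} \<union> snd ` {(i, j). x i j \<noteq> 0}"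
    unfolding indices_def by force
  with assms show ?thesis by (meson finite_Un finite_imageI finite_subset)
qed

lemma nonzero_rows_subset_indices: "nonzero_rows x \<subseteq> indices x"
  and row_support_subset_indices: "row_support x i \<subseteq> indices x"
  unfolding nonzero_rows_def row_support_def by (auto intro: indicesI1 indicesI2)

lemma indices_add:
  fixes x y :: "'i \<Rightarrow> 'i \<Rightarrow> 'a::monoid_add"
  shows "indices (x + y) \<subseteq> indices x \<union> indices y"
proof
  fix i assume "i \<in> indices (x + y)"
  then obtain j where "(x + y) i j \<noteq> 0 \<or> (x + y) j i \<noteq> 0"
    unfolding indices_def by blast
  then have "x i j \<noteq> 0 \<or> x j i \<noteq> 0 \<or> y i j \<noteq> 0 \<or> y j i \<noteq> 0"
    by auto
  then show "i \<in> indices x \<union> indices y"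
    unfolding indices_def by blast
qed

lemma nonzero_rows_diff:
  fixes x y :: "'i \<Rightarrow> 'i \<Rightarrow> 'a::group_add"
  shows "nonzero_rows (x - y) \<subseteq> nonzero_rows x \<union> nonzero_rows y"
  unfolding nonzero_rows_def by auto

lemma row_part_diff:
  fixes x y :: "'i \<Rightarrow> 'i \<Rightarrow> 'a::group_add"
  shows "row_part (x - y) i = row_part x i - row_part y i"
  unfolding row_part_def by (simp add: fun_eq_iff)

lemma row_part_eq_0_iff: "row_part x i = 0 \<longleftrightarrow> i \<notin> nonzero_rows x"
  unfolding row_part_def nonzero_rows_def by (auto simp: fun_eq_iff)

lemma nonzero_rows_row_part: "nonzero_rows (row_part x i) \<subseteq> {i}"
  unfolding row_part_def nonzero_rows_def by auto

lemma nonzero_rows_empty_iff: "nonzero_rows x = {} \<longleftrightarrow> x = 0"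
  unfolding nonzero_rows_def by (auto simp: fun_eq_iff)

locale gm_matrix_ring =
  fixes I :: "'i set" and A :: "'i \<Rightarrow> 'i \<Rightarrow> 'a::ab_group_add set"
    and m :: "'i \<Rightarrow> 'i \<Rightarrow> 'i \<Rightarrow> 'a \<Rightarrow> 'a \<Rightarrow> 'a"
  assumes gm: "gm_ring I A m"
begin

abbreviation "C \<equiv> gm_carrier I A"
abbreviation "mu \<equiv> gm_mult I m"

lemma component_subgroup: "i \<in> I \<Longrightarrow> j \<in> I \<Longrightarrow> add_subgroup (A i j)"
  using gm unfolding gm_ring_def by simp

lemma component_zero [simp]: "i \<in> I \<Longrightarrow> j \<in> I \<Longrightarrow> 0 \<in> A i j"
  and component_add [simp]: "i \<in> I \<Longrightarrow> j \<in> I \<Longrightarrow> x \<in> A i j \<Longrightarrow> y \<in> A i j \<Longrightarrow> x + y \<in> A i j"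
  and component_uminus [simp]: "i \<in> I \<Longrightarrow> j \<in> I \<Longrightarrow> x \<in> A i j \<Longrightarrow> - x \<in> A i j"
  using component_subgroup unfolding add_subgroup_def by blast+

lemma component_sum: "i \<in> I \<Longrightarrow> j \<in> I \<Longrightarrow> (\<And>k. k \<in> K \<Longrightarrow> f k \<in> A i j) \<Longrightarrow> sum f K \<in> A i j"
  by (induction K rule: infinite_finite_induct) auto

lemma m_closed [simp]:
  "i \<in> I \<Longrightarrow> j \<in> I \<Longrightarrow> l \<in> I \<Longrightarrow> x \<in> A i j \<Longrightarrow> y \<in> A j l \<Longrightarrow> m i j l x y \<in> A i l"
  using gm unfolding gm_ring_def by simp

lemma m_add_left: "i \<in> I \<Longrightarrow> j \<in> I \<Longrightarrow> l \<in> I \<Longrightarrow> x \<in> A i j \<Longrightarrow> x' \<in> A i j \<Longrightarrow> y \<in> A j l \<Longrightarrow>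
    m i j l (x + x') y = m i j l x y + m i j l x' y"
  using gm unfolding gm_ring_def by simp

lemma m_add_right: "i \<in> I \<Longrightarrow> j \<in> I \<Longrightarrow> l \<in> I \<Longrightarrow> x \<in> A i j \<Longrightarrow> y \<in> A j l \<Longrightarrow> y' \<in> A j l \<Longrightarrow>
    m i j l x (y + y') = m i j l x y + m i j l x y'"
  using gm unfolding gm_ring_def by simp

lemma m_assoc: "i \<in> I \<Longrightarrow> j \<in> I \<Longrightarrow> k \<in> I \<Longrightarrow> l \<in> I \<Longrightarrow>
    x \<in> A i j \<Longrightarrow> y \<in> A j k \<Longrightarrow> z \<in> A k l \<Longrightarrow>
    m i k l (m i j k x y) z = m i j l x (m j k l y z)"
  using gm unfolding gm_ring_def by simp

lemma m_zero_left [simp]: "i \<in> I \<Longrightarrow> j \<in> I \<Longrightarrow> l \<in> I \<Longrightarrow> y \<in> A j l \<Longrightarrow> m i j l 0 y = 0"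
  using m_add_left[of i j l 0 0 y] by simp

lemma m_zero_right [simp]: "i \<in> I \<Longrightarrow> j \<in> I \<Longrightarrow> l \<in> I \<Longrightarrow> x \<in> A i j \<Longrightarrow> m i j l x 0 = 0"
  using m_add_right[of i j l x 0 0] by simp

lemma m_sum_left: "i \<in> I \<Longrightarrow> j \<in> I \<Longrightarrow> l \<in> I \<Longrightarrow> (\<And>k. k \<in> K \<Longrightarrow> f k \<in> A i j) \<Longrightarrow> y \<in> A j l \<Longrightarrow>
    m i j l (sum f K) y = (\<Sum>k\<in>K. m i j l (f k) y)"
  by (induction K rule: infinite_finite_induct) (simp_all add: m_add_left component_sum)

lemma m_sum_right: "i \<in> I \<Longrightarrow> j \<in> I \<Longrightarrow> l \<in> I \<Longrightarrow> (\<And>k. k \<in> K \<Longrightarrow> f k \<in> A j l) \<Longrightarrow> x \<in> A i j \<Longrightarrow>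
    m i j l x (sum f K) = (\<Sum>k\<in>K. m i j l x (f k))"
  by (induction K rule: infinite_finite_induct) (simp_all add: m_add_right component_sum)

lemma carrier_entry: "x \<in> C \<Longrightarrow> i \<in> I \<Longrightarrow> j \<in> I \<Longrightarrow> x i j \<in> A i j"
  and carrier_outside: "x \<in> C \<Longrightarrow> \<not> (i \<in> I \<and> j \<in> I) \<Longrightarrow> x i j = 0"
  unfolding gm_carrier_def by (metis (mono_tags, lifting) mem_Collect_eq)+

lemma finite_indices_carrier: "x \<in> C \<Longrightarrow> finite (indices x)"
  unfolding gm_carrier_def using finite_indices by blast

lemma indices_carrier_subset: "x \<in> C \<Longrightarrow> indices x \<subseteq> I"
  unfolding indices_def using carrier_outside by fastforce

lemma carrierI:
  assumes "\<And>i j. i \<in> I \<Longrightarrow> j \<in> I \<Longrightarrow> x i j \<in> A i j"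
    and "\<And>i j. \<not> (i \<in> I \<and> j \<in> I) \<Longrightarrow> x i j = 0"
    and "finite {(i, j). x i j \<noteq> 0}"
  shows "x \<in> C"
  using assms unfolding gm_carrier_def by auto

lemma carrier_restrict:
  assumes "x \<in> C"
  shows "(\<lambda>p q. if P p q then x p q else 0) \<in> C"
proof (rule carrierI)
  have "finite {(i, j). x i j \<noteq> 0}"
    using assms unfolding gm_carrier_def by blast
  then show "finite {(i, j). (if P i j then x i j else 0) \<noteq> 0}"
    by (rule finite_subset[rotated]) auto
qed (simp_all add: assms carrier_entry carrier_outside)

lemma gm_mult_outside: "\<not> (i \<in> I \<and> j \<in> I) \<Longrightarrow> mu x y i j = 0"
  unfolding gm_mult_def by auto

lemma gm_mult_eq_sum:
  assumes y: "y \<in> C" and i: "i \<in> I" and j: "j \<in> I"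
    and K: "indices x \<subseteq> K" "finite K" "K \<subseteq> I"
  shows "mu x y i j = (\<Sum>k\<in>K. m i k j (x i k) (y k j))"
proof -
  have "mu x y i j = (\<Sum>k\<in>{k \<in> I. x i k \<noteq> 0}. m i k j (x i k) (y k j))"
    using i j unfolding gm_mult_def by simp
  also have "\<dots> = (\<Sum>k\<in>K. m i k j (x i k) (y k j))"
    by (rule sum.mono_neutral_left[OF K(2)]) (use K i j y in \<open>auto simp: carrier_entry intro: indicesI2\<close>)
  finally show ?thesis .
qed

lemma gm_mult_single_term:
  assumes x: "x \<in> C" and y: "y \<in> C" and p: "p \<in> I" and q: "q \<in> I" and j: "j \<in> I"
    and only_j: "\<And>k. k \<noteq> j \<Longrightarrow> x p k = 0 \<or> y k q = 0"
  shows "mu x y p q = m p j q (x p j) (y j q)"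
proof -
  let ?K = "insert j (indices x)"
  have K: "finite ?K" "?K \<subseteq> I"
    using finite_indices_carrier[OF x] indices_carrier_subset[OF x] j by auto
  have "mu x y p q = (\<Sum>k\<in>?K. m p k q (x p k) (y k q))"
    using gm_mult_eq_sum[OF y p q _ K] by blast
  also have "\<dots> = m p j q (x p j) (y j q) + (\<Sum>k\<in>?K - {j}. m p k q (x p k) (y k q))"
    using K(1) by (simp add: sum.insert_remove)
  also have "(\<Sum>k\<in>?K - {j}. m p k q (x p k) (y k q)) = 0"
    by (rule sum.neutral) (use only_j K p q x y in \<open>fastforce simp: carrier_entry\<close>)
  finally show ?thesis by simp
qed

lemma gm_mult_row_zero: "(\<And>k. x p k = 0) \<Longrightarrow> mu x y p q = 0"
  unfolding gm_mult_def by simp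

lemma gm_mult_column_zero: "x \<in> C \<Longrightarrow> (\<And>k. y k q = 0) \<Longrightarrow> mu x y p q = 0"
  unfolding gm_mult_def by (auto simp: carrier_entry intro!: sum.neutral)

lemma gm_mult_nonzero_indices:
  assumes x: "x \<in> C" and nz: "mu x y i j \<noteq> 0"
  shows "i \<in> indices x" "j \<in> indices y"
  using nz gm_mult_row_zero gm_mult_column_zero[OF x] indicesI1 indicesI2 by metis+

lemma indices_gm_mult:
  assumes x: "x \<in> C"
  shows "indices (mu x y) \<subseteq> indices x \<union> indices y"
proof
  fix a assume "a \<in> indices (mu x y)"
  then obtain b where "mu x y a b \<noteq> 0 \<or> mu x y b a \<noteq> 0"
    unfolding indices_def by blast
  then show "a \<in> indices x \<union> indices y"
    using gm_mult_nonzero_indices[OF x] by blast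
qed

lemma gm_mult_closed:
  assumes x: "x \<in> C" and y: "y \<in> C"
  shows "mu x y \<in> C"
proof (rule carrierI)
  show "mu x y i j \<in> A i j" if "i \<in> I" "j \<in> I" for i j
    using that x y unfolding gm_mult_def by (auto intro!: component_sum simp: carrier_entry)
  show "mu x y i j = 0" if "\<not> (i \<in> I \<and> j \<in> I)" for i j
    using that by (rule gm_mult_outside)
  have "{(i, j). mu x y i j \<noteq> 0} \<subseteq> indices x \<times> indices y"
    using gm_mult_nonzero_indices[OF x] by blast
  then show "finite {(i, j). mu x y i j \<noteq> 0}"
    using finite_indices_carrier x y by (meson finite_SigmaI finite_subset)
qed

lemma carrier_add: "x \<in> C \<Longrightarrow> y \<in> C \<Longrightarrow> x + y \<in> C"
  and carrier_uminus: "x \<in> C \<Longrightarrow> - x \<in> C"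
  and carrier_zero: "0 \<in> C"
  unfolding gm_carrier_def
  by (auto intro: finite_subset[of _ "{(i, j). x i j \<noteq> 0} \<union> {(i, j). y i j \<noteq> 0}"])

lemma gm_mult_distrib_left:
  assumes x: "x \<in> C" and y: "y \<in> C" and z: "z \<in> C"
  shows "mu (x + y) z = mu x z + mu y z"
proof (intro ext)
  fix i j
  show "mu (x + y) z i j = (mu x z + mu y z) i j"
  proof (cases "i \<in> I \<and> j \<in> I")
    case True
    let ?K = "indices x \<union> indices y"
    have K: "finite ?K" "?K \<subseteq> I"
      using finite_indices_carrier indices_carrier_subset x y by auto
    have "mu (x + y) z i j = (\<Sum>k\<in>?K. m i k j ((x + y) i k) (z k j))"
      using gm_mult_eq_sum[OF z _ _ indices_add K] True by blast
    also have "\<dots> = (\<Sum>k\<in>?K. m i k j (x i k) (z k j)) + (\<Sum>k\<in>?K. m i k j (y i k) (z k j))"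
      unfolding sum.distrib[symmetric]
      by (rule sum.cong) (use K True x y z in \<open>auto simp: m_add_left carrier_entry\<close>)
    also have "\<dots> = mu x z i j + mu y z i j"
      using gm_mult_eq_sum[OF z _ _ _ K] True
      by simp
    finally show ?thesis by simp
  qed (simp add: gm_mult_outside)
qed

lemma gm_mult_distrib_right:
  assumes x: "x \<in> C" and y: "y \<in> C" and z: "z \<in> C"
  shows "mu x (y + z) = mu x y + mu x z"
proof (intro ext)
  fix i j
  show "mu x (y + z) i j = (mu x y + mu x z) i j"
  proof (cases "i \<in> I \<and> j \<in> I")
    case True
    let ?K = "indices x"
    have K: "finite ?K" "?K \<subseteq> I"
      using finite_indices_carrier indices_carrier_subset x by auto
    have "mu x (y + z) i j = (\<Sum>k\<in>?K. m i k j (x i k) ((y + z) k j))"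
      using gm_mult_eq_sum[OF carrier_add[OF y z] _ _ _ K] True by blast
    also have "\<dots> = (\<Sum>k\<in>?K. m i k j (x i k) (y k j)) + (\<Sum>k\<in>?K. m i k j (x i k) (z k j))"
      unfolding sum.distrib[symmetric]
      by (rule sum.cong) (use K True x y z in \<open>auto simp: m_add_right carrier_entry\<close>)
    also have "\<dots> = mu x y i j + mu x z i j"
      using gm_mult_eq_sum[OF y _ _ _ K] gm_mult_eq_sum[OF z _ _ _ K] True
      by simp
    finally show ?thesis by simp
  qed (simp add: gm_mult_outside)
qed

lemma gm_mult_assoc:
  assumes x: "x \<in> C" and y: "y \<in> C" and z: "z \<in> C"
  shows "mu (mu x y) z = mu x (mu y z)"
proof (intro ext)
  fix i j
  show "mu (mu x y) z i j = mu x (mu y z) i j"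
  proof (cases "i \<in> I \<and> j \<in> I")
    case True
    let ?K = "indices x \<union> indices y"
    have K: "finite ?K" "?K \<subseteq> I"
      using finite_indices_carrier indices_carrier_subset x y by auto
    have in_I: "k \<in> I" if "k \<in> ?K" for k
      using that K(2) by blast
    have x_entry: "x i k \<in> A i k" if "k \<in> ?K" for k
      using in_I[OF that] True x by (simp add: carrier_entry)
    have y_entry: "y k l \<in> A k l" if "k \<in> ?K" "l \<in> ?K" for k l
      using in_I[OF that(1)] in_I[OF that(2)] y by (simp add: carrier_entry)
    have z_entry: "z l j \<in> A l j" if "l \<in> ?K" for l
      using in_I[OF that] True z by (simp add: carrier_entry)
    note entries = in_I x_entry y_entry z_entry
    have "mu (mu x y) z i j = (\<Sum>l\<in>?K. m i l j (mu x y i l) (z l j))"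
      using gm_mult_eq_sum[OF z _ _ indices_gm_mult[OF x] K] True
      by blast
    also have "\<dots> = (\<Sum>l\<in>?K. m i l j (\<Sum>k\<in>?K. m i k l (x i k) (y k l)) (z l j))"
      using gm_mult_eq_sum[OF y _ _ _ K] K True by (intro sum.cong) auto
    also have "\<dots> = (\<Sum>l\<in>?K. \<Sum>k\<in>?K. m i l j (m i k l (x i k) (y k l)) (z l j))"
      using K True entries by (intro sum.cong refl m_sum_left) auto
    also have "\<dots> = (\<Sum>l\<in>?K. \<Sum>k\<in>?K. m i k j (x i k) (m k l j (y k l) (z l j)))"
      using K True entries by (intro sum.cong refl m_assoc) auto
    also have "\<dots> = (\<Sum>k\<in>?K. \<Sum>l\<in>?K. m i k j (x i k) (m k l j (y k l) (z l j)))"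
      by (rule sum.swap)
    also have "\<dots> = (\<Sum>k\<in>?K. m i k j (x i k) (\<Sum>l\<in>?K. m k l j (y k l) (z l j)))"
      using K True entries by (intro sum.cong refl m_sum_right[symmetric]) auto
    also have "\<dots> = (\<Sum>k\<in>?K. m i k j (x i k) (mu y z k j))"
      using gm_mult_eq_sum[OF z _ _ _ K] K True by (intro sum.cong) auto
    also have "\<dots> = mu x (mu y z) i j"
      using gm_mult_eq_sum[OF gm_mult_closed[OF y z] _ _ _ K] True by simp
    finally show ?thesis .
  qed (simp add: gm_mult_outside)
qed

sublocale nonunital_ring C mu
  by unfold_locales
    (auto simp: carrier_add carrier_uminus carrier_zero gm_mult_closed
      gm_mult_distrib_left gm_mult_distrib_right gm_mult_assoc)

lemma gm_vn_regular_iff_regular: "gm_vn_regular I A m x \<longleftrightarrow> regular x"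
  unfolding gm_vn_regular_def regular_def ..

lemma carrier_row_part: "x \<in> C \<Longrightarrow> row_part x i \<in> C"
  unfolding row_part_def by (rule carrier_restrict[where P = "\<lambda>p q. p = i"])

lemma carrier_column_part: "x \<in> C \<Longrightarrow> column_part x i \<in> C"
  unfolding column_part_def by (rule carrier_restrict[where P = "\<lambda>p q. q = i"])

lemma carrier_single_entry:
  assumes "g \<in> A j i" "i \<in> I" "j \<in> I"
  shows "single_entry j i g \<in> C"
proof (rule carrierI)
  show "finite {(k, l). single_entry j i g k l \<noteq> 0}"
    by (rule finite_subset[of _ "{(j, i)}"]) (auto simp: single_entry_def)
qed (use assms in \<open>auto simp: single_entry_def\<close>)

lemma finite_nonzero_rows: "x \<in> C \<Longrightarrow> finite (nonzero_rows x)"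
  and finite_row_support: "x \<in> C \<Longrightarrow> finite (row_support x i)"
  by (metis finite_indices_carrier nonzero_rows_subset_indices finite_subset)
    (metis finite_indices_carrier row_support_subset_indices finite_subset)

lemma nonzero_rows_gm_mult: "nonzero_rows (mu x y) \<subseteq> nonzero_rows x"
  unfolding nonzero_rows_def using gm_mult_row_zero by blast

lemma nonzero_rows_diff_mult: "nonzero_rows (x - mu (mu x y) x) \<subseteq> nonzero_rows x"
  using nonzero_rows_diff[of x "mu (mu x y) x"] nonzero_rows_gm_mult[of "mu x y" x]
    nonzero_rows_gm_mult[of x y] by blast

lemma row_part_gm_mult: "row_part (mu x y) i = mu (row_part x i) y"
  unfolding row_part_def gm_mult_def by (simp add: fun_eq_iff)

lemma gm_mult_column_part:
  assumes x: "x \<in> C" and y: "y \<in> C" and i: "i \<in> I"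
  shows "mu (column_part x i) y = mu x (row_part y i)"
proof (intro ext)
  fix p q
  show "mu (column_part x i) y p q = mu x (row_part y i) p q"
  proof (cases "p \<in> I \<and> q \<in> I")
    case True
    then have "mu (column_part x i) y p q = m p i q (x p i) (y i q)"
      using gm_mult_single_term[OF carrier_column_part[OF x] y _ _ i]
      by (simp add: column_part_def)
    also have "\<dots> = mu x (row_part y i) p q"
      using True gm_mult_single_term[OF x carrier_row_part[OF y] _ _ i]
      by (simp add: row_part_def)
    finally show ?thesis .
  qed (simp add: gm_mult_outside)
qed

lemma gm_mult_single_entry:
  assumes x: "x \<in> C" and g: "g \<in> A j i" and ij: "i \<in> I" "j \<in> I" and pq: "p \<in> I" "q \<in> I"
  shows "mu (mu x (single_entry j i g)) x p q = m p i q (m p j i (x p j) g) (x i q)"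
proof -
  let ?y = "single_entry j i g"
  have y: "?y \<in> C" using carrier_single_entry[OF g ij] .
  have "mu x ?y p i = m p j i (x p j) g"
    using gm_mult_single_term[OF x y pq(1) ij] by (simp add: single_entry_def)
  moreover have "mu x ?y p k = 0" if "k \<noteq> i" for k
    using that by (intro gm_mult_column_zero[OF x]) (simp add: single_entry_def)
  ultimately show ?thesis
    using gm_mult_single_term[OF gm_mult_closed[OF x y] x pq(1) pq(2) ij(1)] by simp
qed

end

locale gm_ring_ideal = gm_matrix_ring I A m
  for I :: "'i set" and A :: "'i \<Rightarrow> 'i \<Rightarrow> 'a::ab_group_add set"
    and m :: "'i \<Rightarrow> 'i \<Rightarrow> 'i \<Rightarrow> 'a \<Rightarrow> 'a \<Rightarrow> 'a" +
  fixes D :: "'i \<Rightarrow> 'i \<Rightarrow> 'a set"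
  assumes ideal: "gm_ideal I A m (gm_sum_set I A D)"
    and entries_rn: "\<forall>i\<in>I. \<forall>j\<in>I. D i j \<subseteq> comp_rn A m i j"
begin

abbreviation "S \<equiv> gm_sum_set I A D"

lemma sum_set_carrier: "x \<in> S \<Longrightarrow> x \<in> C"
  and sum_set_entry: "x \<in> S \<Longrightarrow> i \<in> I \<Longrightarrow> j \<in> I \<Longrightarrow> x i j \<in> D i j"
  unfolding gm_sum_set_def by blast+

lemma sum_set_entry_regular:
  assumes "x \<in> S" "i \<in> I" "j \<in> I"
  obtains g where "g \<in> A j i" "x i j = m i i j (m i j i (x i j) g) (x i j)"
  using assms entries_rn sum_set_entry
  unfolding comp_rn_def comp_vn_regular_def by blast

lemma sum_set_diff_mult:
  assumes x: "x \<in> S" and y: "y \<in> C"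
  shows "x - mu (mu x y) x \<in> S"
proof -
  have w: "mu (mu x y) x \<in> S"
    using ideal x y sum_set_carrier gm_mult_closed unfolding gm_ideal_def by blast
  have "gm_add x (gm_neg (mu (mu x y) x)) \<in> S"
    using ideal x w unfolding gm_ideal_def by blast
  moreover have "gm_add x (gm_neg (mu (mu x y) x)) = x - mu (mu x y) x"
    unfolding gm_add_def gm_neg_def by (simp add: fun_eq_iff)
  ultimately show ?thesis by simp
qed

lemma sum_set_row_part:
  assumes x: "x \<in> S"
  shows "row_part x i \<in> S"
proof -
  have "gm_zero \<in> S" using ideal unfolding gm_ideal_def by blast
  then have "0 \<in> D p q" if "p \<in> I" "q \<in> I" for p q
    using that sum_set_entry unfolding gm_zero_def by fastforce
  then show ?thesis
    using x carrier_row_part[OF sum_set_carrier[OF x]] sum_set_entry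
    unfolding gm_sum_set_def row_part_def by auto
qed

lemma single_row_descent_step:
  assumes x: "x \<in> S" and i: "i \<in> I" and rows: "nonzero_rows x \<subseteq> {i}" and "x \<noteq> 0"
  shows "\<exists>y\<in>C. x - mu (mu x y) x \<in> S \<and> nonzero_rows (x - mu (mu x y) x) \<subseteq> {i}
    \<and> card (row_support (x - mu (mu x y) x) i) < card (row_support x i)"
proof -
  obtain j where xij: "x i j \<noteq> 0"
    using \<open>x \<noteq> 0\<close> rows nonzero_rows_empty_iff[of x] unfolding nonzero_rows_def by blast
  have xC: "x \<in> C" using sum_set_carrier[OF x] .
  then have j: "j \<in> I" using xij carrier_outside i by blast
  obtain g where g: "g \<in> A j i" and eg: "x i j = m i i j (m i j i (x i j) g) (x i j)"
    using sum_set_entry_regular[OF x i j] .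
  let ?y = "single_entry j i g"
  let ?z = "x - mu (mu x ?y) x"
  have y: "?y \<in> C" using carrier_single_entry[OF g i j] .
  have z: "?z \<in> S" using sum_set_diff_mult[OF x y] .
  have "row_support ?z i \<subseteq> row_support x i - {j}"
  proof
    fix q assume "q \<in> row_support ?z i"
    then have zq: "?z i q \<noteq> 0" by (simp add: row_support_def)
    then have q: "q \<in> I" using carrier_outside[OF sum_set_carrier[OF z]] i by blast
    have "mu (mu x ?y) x i q = m i i q (m i j i (x i j) g) (x i q)"
      using gm_mult_single_entry[OF xC g i j i q] .
    then show "q \<in> row_support x i - {j}"
      using zq eg i j q g xC by (auto simp: row_support_def carrier_entry)
  qed
  then have "card (row_support ?z i) < card (row_support x i)"
    using xij finite_row_support[OF xC]
    by (intro psubset_card_mono) (auto simp: row_support_def)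
  moreover have "nonzero_rows ?z \<subseteq> {i}" using nonzero_rows_diff_mult rows by blast
  ultimately show ?thesis using y z by blast
qed

lemma regular_single_row:
  assumes "x \<in> S" "i \<in> I" "nonzero_rows x \<subseteq> {i}"
  shows "regular x"
  by (rule regular_by_descent[where P = "\<lambda>x. x \<in> S \<and> nonzero_rows x \<subseteq> {i}"
        and f = "\<lambda>x. card (row_support x i)"])
    (use assms sum_set_carrier single_row_descent_step in auto)

lemma nonzero_rows_descent_step:
  assumes x: "x \<in> S" and "x \<noteq> 0"
  shows "\<exists>y\<in>C. x - mu (mu x y) x \<in> S
    \<and> card (nonzero_rows (x - mu (mu x y) x)) < card (nonzero_rows x)"
proof -
  have xC: "x \<in> C" using sum_set_carrier[OF x] .
  obtain i where row_i: "i \<in> nonzero_rows x"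
    using \<open>x \<noteq> 0\<close> nonzero_rows_empty_iff by blast
  then have i: "i \<in> I" using carrier_outside[OF xC] unfolding nonzero_rows_def by blast
  let ?r = "row_part x i"
  have r: "?r \<in> C" using carrier_row_part[OF xC] .
  have "regular ?r"
    using regular_single_row[OF sum_set_row_part[OF x] i nonzero_rows_row_part] .
  then obtain y where y: "y \<in> C" and ry: "mu (mu ?r y) ?r = ?r"
    unfolding regular_def by metis
  txt \<open>Writing e_i for the formal i-th diagonal unit, r = e_i x and ?y = y e_i, so the
    row i part of x ?y x is r y r = r.\<close>
  let ?y = "column_part y i"
  have y': "?y \<in> C" using carrier_column_part[OF y] .
  have "row_part (mu (mu x ?y) x) i = mu (mu ?r ?y) x"
    by (simp add: row_part_gm_mult)
  also have "\<dots> = mu ?r (mu y ?r)"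
    using gm_mult_assoc[OF r y' xC] gm_mult_column_part[OF y xC i] by simp
  also have "\<dots> = ?r"
    using gm_mult_assoc[OF r y r] ry by simp
  finally have "i \<notin> nonzero_rows (x - mu (mu x ?y) x)"
    using row_part_eq_0_iff row_part_diff by (metis diff_self)
  then have "nonzero_rows (x - mu (mu x ?y) x) \<subset> nonzero_rows x"
    using nonzero_rows_diff_mult row_i by blast
  then have "card (nonzero_rows (x - mu (mu x ?y) x)) < card (nonzero_rows x)"
    using finite_nonzero_rows[OF xC] by (rule psubset_card_mono[rotated])
  then show ?thesis using y' sum_set_diff_mult[OF x y'] by blast
qed

lemma regular_sum_set: "x \<in> S \<Longrightarrow> regular x"
  by (rule regular_by_descent[where P = "\<lambda>x. x \<in> S" and f = "\<lambda>x. card (nonzero_rows x)"])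
    (use sum_set_carrier nonzero_rows_descent_step in auto)

end

theorem lemma2p2:
  fixes I :: "'i set" and A :: "'i \<Rightarrow> 'i \<Rightarrow> 'a::ab_group_add set"
    and m :: "'i \<Rightarrow> 'i \<Rightarrow> 'i \<Rightarrow> 'a \<Rightarrow> 'a \<Rightarrow> 'a"
    and D :: "'i \<Rightarrow> 'i \<Rightarrow> 'a set"
  assumes gm: "gm_ring I A m"
    and D_sub: "\<forall>i\<in>I. \<forall>j\<in>I. D i j \<subseteq> A i j"
    and D_ideal: "gm_ideal I A m (gm_sum_set I A D)"
    and D_rn: "\<forall>i\<in>I. \<forall>j\<in>I. D i j \<subseteq> comp_rn A m i j"
  shows "(\<forall>x\<in>gm_sum_set I A D. gm_vn_regular I A m x) \<and> gm_sum_set I A D \<subseteq> gm_rn I A m"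
proof -
  interpret gm_ring_ideal I A m D
    using gm D_ideal D_rn by unfold_locales
  have regular: "\<forall>x\<in>gm_sum_set I A D. gm_vn_regular I A m x"
    using regular_sum_set gm_vn_regular_iff_regular by blast
  moreover have "gm_sum_set I A D \<subseteq> gm_rn I A m"
    unfolding gm_rn_def using regular D_ideal by blast
  ultimately show ?thesis ..
qed

end
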